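(* There is $C_{\boldsymbol\tau,\boldsymbol\eta}>0$ such that for any $\phi\in W^\infty(\mathbb T^{2n})$ and any nonconstant zero-average $f,g\in W_0^\infty(\mathbb T^{2n})$ with $L_{\boldsymbol\eta}f-L_{\boldsymbol\tau}g=\phi$, there is a nonconstant $P\in W^\infty(\mathbb T^{2n})$ such that for all $s\ge0$: $\|g-L_{\boldsymbol\eta}P\|_s\le C_{\boldsymbol\tau,\boldsymbol\eta}\|\phi\|_{s+2\gamma}$, $\|f-L_{\boldsymbol\tau}P\|_s\le C_{\boldsymbol\tau,\boldsymbol\eta}\|\phi\|_{s+2\gamma}$, $\|P\|_s\le C_{\boldsymbol\tau,\boldsymbol\eta}(\|f\|_{s+2\gamma}+\|g\|_{s+2\gamma})$.
   Context: $\boldsymbol\tau=(\tau_1,\dots,\tau_n,0,\dots,0)$, $\boldsymbol\eta=(0,\dots,0,\eta_1,\dots,\eta_n)\in\mathbb R^{2n}$, $n\ge2$, with $\sum\tau_j\eta_j=0$, Diophantine: there are $c,\gamma>0$ with $|\boldsymbol\tau\cdot\mathbf m-p|>c|\mathbf m_1\cdot\mathbf m_1|^{-\gamma}$ if $\mathbf m_1\ne0$ and $|\boldsymbol\eta\cdot\mathbf m-p|>c|\mathbf m_2\cdot\mathbf m_2|^{-\gamma}$ if $\mathbf m_2\ne0$, for $\mathbf m=(\mathbf m_1,\mathbf m_2)\in\mathbb Z^n\times\mathbb Z^n$, $p\in\mathbb Z$. On $L^2(\mathbb T^{2n})$ write $f=\sum_{\mathbf m}f_{\mathbf m}e^{2\pi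 i\mathbf m\cdot(\mathbf x,\boldsymbol\xi)}$, $\|f\|_s^2=\sum_{\mathbf m}(1+4\pi^2\mathbf m\cdot\mathbf m)^s|f_{\mathbf m}|^2$, $W^\infty(\mathbb T^{2n})=\bigcap_sW^s$, $W^\infty_0$ its zero-average subspace. For $\boldsymbol\kappa\in\{\boldsymbol\tau,\boldsymbol\eta\}$, $L_{\boldsymbol\kappa}h(\mathbf x,\boldsymbol\xi)=h((\mathbf x,\boldsymbol\xi)+\boldsymbol\kappa)-h(\mathbf x,\boldsymbol\xi)$. *)

theory Defs
  imports "HOL-Analysis.Analysis"
begin

text \<open>Functions on the torus T^{2n} = T^n x T^n are represented by their Fourier
coefficients: h = sum_m h_m e^{2 pi i m.(x,xi)}, with frequency m = (m1,m2) in Z^n x Z^n.\<close>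

type_synonym 'n freq = "(int^'n) \<times> (int^'n)"
type_synonym 'n coeffs = "'n freq \<Rightarrow> complex"

definition sqn :: "int^'n::finite \<Rightarrow> real" where
  "sqn v = (\<Sum>j\<in>UNIV. (real_of_int (v $ j))^2)"

definition msq :: "'n::finite freq \<Rightarrow> real" where
  "msq m = sqn (fst m) + sqn (snd m)"

definition kdot :: "(real^'n::finite) \<times> (real^'n) \<Rightarrow> 'n freq \<Rightarrow> real" where
  "kdot k m = (\<Sum>j\<in>UNIV. fst k $ j * real_of_int (fst m $ j))
            + (\<Sum>j\<in>UNIV. snd k $ j * real_of_int (snd m $ j))"

definition sob_weight :: "real \<Rightarrow> 'n::finite freq \<Rightarrow> real" where
  "sob_weight s m = (1 + 4 * pi^2 * msq m) powr s"

definition sob_norm :: "real \<Rightarrow> 'n::finite coeffs \<Rightarrow> real" where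
  "sob_norm s h = sqrt (\<Sum>\<^sub>\<infinity>m. sob_weight s m * (cmod (h m))^2)"

definition in_W :: "real \<Rightarrow> 'n::finite coeffs \<Rightarrow> bool" where
  "in_W s h \<longleftrightarrow> (\<lambda>m. sob_weight s m * (cmod (h m))^2) summable_on UNIV"

definition W_inf :: "'n::finite coeffs \<Rightarrow> bool" where
  "W_inf h \<longleftrightarrow> (\<forall>s. in_W s h)"

definition W0_inf :: "'n::finite coeffs \<Rightarrow> bool" where
  "W0_inf h \<longleftrightarrow> W_inf h \<and> h 0 = 0"

definition nonconst :: "'n::finite coeffs \<Rightarrow> bool" where
  "nonconst h \<longleftrightarrow> (\<exists>m. m \<noteq> 0 \<and> h m \<noteq> 0)"

text \<open>L_kappa h = h(. + kappa) - h, on Fourier coefficients: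
  (L_kappa h)_m = (e^{2 pi i kappa.m} - 1) h_m\<close>
definition Lop :: "(real^'n::finite) \<times> (real^'n) \<Rightarrow> 'n coeffs \<Rightarrow> 'n coeffs" where
  "Lop k h = (\<lambda>m. (exp (2 * pi * \<i> * complex_of_real (kdot k m)) - 1) * h m)"

end

theory Submission
  imports Defs
begin

text \<open>On Fourier coefficients \<open>L\<^sub>\<kappa>\<close> is multiplication by \<open>exp(2\<pi>i \<kappa>\<cdot>m) - 1\<close>, whose
modulus is at least twice the distance from \<open>\<kappa>\<cdot>m\<close> to the integers. By the Diophantine
conditions the inverse of this multiplier is at most \<open>|m|\<^sup>2\<^sup>\<gamma> / 2c\<close> when \<open>\<kappa> = \<tau>, m\<^sub>1 \<noteq> 0\<close> or
\<open>\<kappa> = \<eta>, m\<^sub>2 \<noteq> 0\<close>. Take \<open>P\<^sub>m = f\<^sub>m / (exp(2\<pi>i \<tau>\<cdot>m) - 1)\<close> if \<open>m\<^sub>1 \<noteq> 0\<close> and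
\<open>P\<^sub>m = g\<^sub>m / (exp(2\<pi>i \<eta>\<cdot>m) - 1)\<close> if \<open>m\<^sub>1 = 0 \<noteq> m\<^sub>2\<close>. By \<open>L\<^sub>\<eta>f - L\<^sub>\<tau>g = \<phi>\<close>, every
coefficient of \<open>g - L\<^sub>\<eta>P\<close> and of \<open>f - L\<^sub>\<tau>P\<close> is \<open>0\<close> or a coefficient of \<open>\<phi>\<close> divided by one
multiplier, so the estimates hold frequency by frequency with the weight \<open>(1 + 4\<pi>\<^sup>2|m|\<^sup>2)\<^sup>2\<^sup>\<gamma>\<close>,
i.e. with a shift of \<open>2\<gamma>\<close> in the Sobolev index.\<close>

lemma abs_le_abs_sin_pi:
  fixes y :: real
  assumes "\<bar>y\<bar> \<le> 1/2"
  shows "\<bar>y\<bar> \<le> \<bar>sin (pi * y)\<bar>"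
proof -
  define x where "x = pi * y"
  have x_le: "\<bar>x\<bar> \<le> pi / 2"
    using assms pi_gt_zero unfolding x_def by (simp add: abs_mult)
  have poly: "(\<Sum>m<3. sin_coeff m * x ^ m) = x"
    by (simp add: sin_coeff_def numeral_3_eq_3)
  have rem: "inverse (fact 3) * \<bar>x\<bar> ^ 3 = \<bar>x\<bar> ^ 3 / (6::real)"
    by (simp add: fact_numeral)
  have taylor: "\<bar>sin x - x\<bar> \<le> \<bar>x\<bar> ^ 3 / 6"
    using Maclaurin_sin_bound[of x 3] unfolding poly rem .
  have "x^2 \<le> (pi/2)^2"
    using x_le by (metis abs_ge_zero power2_abs power_mono)
  also have "\<dots> < 4"
    using pi_less_4 pi_gt_zero power_strict_mono[of "pi/2" 2 2] by simp
  finally have "\<bar>x\<bar> * x^2 \<le> \<bar>x\<bar> * 4"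
    by (intro mult_left_mono) auto
  then have "\<bar>x\<bar> ^ 3 / 6 \<le> \<bar>x\<bar> * 4 / 6"
    by (simp add: numeral_3_eq_3 power2_eq_square mult.assoc)
  with taylor have "\<bar>x\<bar> / 3 \<le> \<bar>sin x\<bar>"
    by linarith
  moreover have "\<bar>y\<bar> \<le> \<bar>x\<bar> / 3"
    using pi_gt3 mult_right_mono[of 3 pi "\<bar>y\<bar>"] unfolding x_def by (simp add: abs_mult)
  ultimately show ?thesis
    unfolding x_def by linarith
qed

lemma dist_round_le_norm_exp_minus_1:
  fixes x :: real
  shows "2 * \<bar>x - of_int (round x)\<bar> \<le> cmod (exp (2 * pi * \<i> * complex_of_real x) - 1)"
proof -
  define y where "y = x - of_int (round x)"
  have y_le: "\<bar>y\<bar> \<le> 1/2"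
    unfolding y_def using of_int_round_ge[of x] of_int_round_le[of x] by linarith
  have "2 * pi * \<i> * complex_of_real x
      = \<i> * complex_of_real (2 * pi * y) + \<i> * (of_int (round x) * (of_real pi * 2))"
    unfolding y_def by (simp add: algebra_simps)
  then have "exp (2 * pi * \<i> * complex_of_real x) = exp (\<i> * complex_of_real (2 * pi * y))"
    by simp
  then have "cmod (exp (2 * pi * \<i> * complex_of_real x) - 1) = 2 * \<bar>sin (pi * y)\<bar>"
    using dist_exp_i_1[of "2 * pi * y"] by (simp add: mult.commute)
  with abs_le_abs_sin_pi[OF y_le] show ?thesis
    unfolding y_def by simp
qed

lemma norm_div_exp_minus_1_sq_le:
  fixes x c \<gamma> S R :: real and z :: complex
  assumes "c > 0" "\<gamma> \<ge> 0" "0 < S" "S \<le> R"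
    and far: "\<forall>p::int. \<bar>x - of_int p\<bar> > c * S powr (- \<gamma>)"
  shows "exp (2 * pi * \<i> * complex_of_real x) \<noteq> 1"
    and "cmod (z / (exp (2 * pi * \<i> * complex_of_real x) - 1))^2
           \<le> 1 / (4 * c^2) * R powr (2 * \<gamma>) * cmod z ^ 2"
proof -
  define E where "E = exp (2 * pi * \<i> * complex_of_real x) - 1"
  define d where "d = c * S powr (- \<gamma>)"
  have d_pos: "d > 0"
    unfolding d_def using assms by simp
  have d_less: "2 * d < cmod E"
    using far[rule_format, of "round x"] dist_round_le_norm_exp_minus_1[of x]
    unfolding d_def E_def by (smt (verit))
  then have E_ne: "E \<noteq> 0"
    using d_pos by auto
  then show "exp (2 * pi * \<i> * complex_of_real x) \<noteq> 1"
    unfolding E_def by simp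
  have "cmod (z / E)^2 = cmod z ^ 2 / (cmod E)^2"
    by (simp add: norm_divide power_divide)
  also have "\<dots> \<le> cmod z ^ 2 / (2 * d)^2"
    using d_less d_pos E_ne by (intro divide_left_mono power_mono) (simp_all add: zero_less_mult_iff)
  also have "(2 * d)^2 = 4 * c^2 * S powr (- 2 * \<gamma>)"
    unfolding d_def using \<open>0 < S\<close>
    by (simp add: power_mult_distrib powr_powr[symmetric] powr_realpow[symmetric] powr_powr mult.commute)
  also have "cmod z ^ 2 / (4 * c^2 * S powr (- 2 * \<gamma>)) = 1 / (4 * c^2) * S powr (2 * \<gamma>) * cmod z ^ 2"
    using \<open>c > 0\<close> \<open>0 < S\<close> by (simp add: powr_minus field_simps)
  also have "\<dots> \<le> 1 / (4 * c^2) * R powr (2 * \<gamma>) * cmod z ^ 2"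
    using \<open>\<gamma> \<ge> 0\<close> \<open>0 < S\<close> \<open>S \<le> R\<close> by (intro mult_right_mono mult_left_mono powr_mono2) auto
  finally show "cmod (z / (exp (2 * pi * \<i> * complex_of_real x) - 1))^2
      \<le> 1 / (4 * c^2) * R powr (2 * \<gamma>) * cmod z ^ 2"
    unfolding E_def .
qed

lemma msq_nonneg: "0 \<le> msq m"
  unfolding msq_def sqn_def by (intro add_nonneg_nonneg sum_nonneg) auto

lemma sqn_pos: "v \<noteq> 0 \<Longrightarrow> 0 < sqn v"
proof -
  assume "v \<noteq> 0"
  then obtain j where "v $ j \<noteq> 0"
    by (metis vec_eq_iff zero_index)
  then show ?thesis
    unfolding sqn_def by (intro sum_pos2[of UNIV j]) auto
qed

lemma sob_base_pos: "0 < 1 + 4 * pi^2 * msq m"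
  by (intro add_pos_nonneg mult_nonneg_nonneg msq_nonneg) auto

lemma msq_le_sob_base: "msq m \<le> 1 + 4 * pi^2 * msq m"
proof -
  have "1 \<le> 4 * pi^2"
    using power_mono[OF pi_ge_two, of 2] by simp
  then show ?thesis
    using msq_nonneg[of m] mult_right_mono[of 1 "4 * pi^2" "msq m"] by simp
qed

lemma sqn_fst_le_sob_base: "sqn (fst m) \<le> 1 + 4 * pi^2 * msq m"
  and sqn_snd_le_sob_base: "sqn (snd m) \<le> 1 + 4 * pi^2 * msq m"
  using msq_le_sob_base[of m] unfolding msq_def sqn_def
  by (smt (verit) sum_nonneg zero_le_power2)+

lemma sob_weight_ge_1: "0 \<le> r \<Longrightarrow> 1 \<le> sob_weight r m"
  using msq_nonneg[of m] unfolding sob_weight_def by (intro ge_one_powr_ge_zero) auto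

lemma sob_weight_add: "sob_weight s m * sob_weight r m = sob_weight (s + r) m"
  using sob_base_pos[of m] unfolding sob_weight_def by (simp add: powr_add)

lemma sob_norm_le_pointwise:
  fixes h u v :: "'n::finite coeffs"
  assumes u: "in_W (s + r) u" and v: "in_W (s + r) v" and "0 \<le> K"
    and pointwise: "\<And>m. cmod (h m)^2 \<le> K * sob_weight r m * (cmod (u m)^2 + cmod (v m)^2)"
  shows "in_W s h"
    and "sob_norm s h \<le> sqrt K * (sob_norm (s + r) u + sob_norm (s + r) v)"
proof -
  define a where "a m = sob_weight (s + r) m * cmod (u m)^2" for m
  define b where "b m = sob_weight (s + r) m * cmod (v m)^2" for m
  have a_sum: "a summable_on UNIV" and b_sum: "b summable_on UNIV"
    using u v unfolding in_W_def a_def b_def by auto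
  have bound: "sob_weight s m * cmod (h m)^2 \<le> K * (a m + b m)" for m
  proof -
    have "sob_weight s m * cmod (h m)^2
        \<le> sob_weight s m * (K * sob_weight r m * (cmod (u m)^2 + cmod (v m)^2))"
      by (intro mult_left_mono pointwise) (simp add: sob_weight_def)
    also have "\<dots> = K * (a m + b m)"
      unfolding a_def b_def sob_weight_add[symmetric] by (simp add: algebra_simps)
    finally show ?thesis .
  qed
  have ab_sum: "(\<lambda>m. K * (a m + b m)) summable_on UNIV"
    by (intro summable_on_cmult_right summable_on_add a_sum b_sum)
  have h_sum: "(\<lambda>m. sob_weight s m * cmod (h m)^2) summable_on UNIV"
    by (rule summable_on_comparison_test[OF ab_sum]) (use bound in \<open>auto simp: sob_weight_def\<close>)
  then show "in_W s h"
    unfolding in_W_def .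
  have "(\<Sum>\<^sub>\<infinity>m. sob_weight s m * cmod (h m)^2) \<le> (\<Sum>\<^sub>\<infinity>m. K * (a m + b m))"
    by (rule infsum_mono[OF h_sum ab_sum bound])
  also have "\<dots> = K * (infsum a UNIV + infsum b UNIV)"
    by (simp add: infsum_cmult_right a_sum b_sum summable_on_add infsum_add)
  finally have "sob_norm s h \<le> sqrt K * sqrt (infsum a UNIV + infsum b UNIV)"
    unfolding sob_norm_def by (simp add: real_sqrt_mult[symmetric])
  also have "\<dots> \<le> sqrt K * (sqrt (infsum a UNIV) + sqrt (infsum b UNIV))"
    using \<open>0 \<le> K\<close> by (intro mult_left_mono sqrt_add_le_add_sqrt infsum_nonneg)
      (auto simp: a_def b_def sob_weight_def)
  finally show "sob_norm s h \<le> sqrt K * (sob_norm (s + r) u + sob_norm (s + r) v)"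
    unfolding sob_norm_def a_def b_def .
qed

corollary sob_norm_le_pointwise_single:
  fixes h u :: "'n::finite coeffs"
  assumes "in_W (s + r) u" and "0 \<le> K"
    and "\<And>m. cmod (h m)^2 \<le> K * sob_weight r m * cmod (u m)^2"
  shows "sob_norm s h \<le> sqrt K * sob_norm (s + r) u"
  using sob_norm_le_pointwise(2)[of s r u "\<lambda>_. 0" K h] assms
  by (simp add: in_W_def sob_norm_def)

definition multiplier :: "(real^'n::finite) \<times> (real^'n) \<Rightarrow> 'n freq \<Rightarrow> complex" where
  "multiplier k m = exp (2 * pi * \<i> * complex_of_real (kdot k m)) - 1"

lemma Lop_apply: "Lop k h m = multiplier k m * h m"
  unfolding Lop_def multiplier_def ..

lemma multiplier_fst_eq_0: "fst m = 0 \<Longrightarrow> multiplier (t, 0) m = 0"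
  unfolding multiplier_def kdot_def by simp

locale diophantine_pair =
  fixes t e :: "real^'n::finite" and c \<gamma> :: real
  assumes c_pos: "c > 0" and \<gamma>_nonneg: "\<gamma> \<ge> 0"
    and dio_tau: "\<forall>(m::'n freq) (p::int). fst m \<noteq> 0 \<longrightarrow>
        \<bar>kdot (t, 0) m - real_of_int p\<bar> > c * (sqn (fst m)) powr (- \<gamma>)"
    and dio_eta: "\<forall>(m::'n freq) (p::int). snd m \<noteq> 0 \<longrightarrow>
        \<bar>kdot (0, e) m - real_of_int p\<bar> > c * (sqn (snd m)) powr (- \<gamma>)"
begin

abbreviation mult_tau :: "'n freq \<Rightarrow> complex" where
  "mult_tau \<equiv> multiplier (t, 0)"

abbreviation mult_eta :: "'n freq \<Rightarrow> complex" where
  "mult_eta \<equiv> multiplier (0, e)"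

lemma mult_tau_bounds:
  assumes "fst m \<noteq> 0"
  shows "mult_tau m \<noteq> 0"
    and "cmod (z / mult_tau m)^2 \<le> 1 / (4 * c^2) * sob_weight (2 * \<gamma>) m * cmod z ^ 2"
proof -
  have "\<forall>p::int. \<bar>kdot (t, 0) m - of_int p\<bar> > c * sqn (fst m) powr (- \<gamma>)"
    using dio_tau assms by blast
  from norm_div_exp_minus_1_sq_le[OF c_pos \<gamma>_nonneg sqn_pos[OF assms] sqn_fst_le_sob_base this]
  show "mult_tau m \<noteq> 0"
    and "cmod (z / mult_tau m)^2 \<le> 1 / (4 * c^2) * sob_weight (2 * \<gamma>) m * cmod z ^ 2"
    unfolding multiplier_def sob_weight_def by auto
qed

lemma mult_eta_bounds:
  assumes "snd m \<noteq> 0"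
  shows "mult_eta m \<noteq> 0"
    and "cmod (z / mult_eta m)^2 \<le> 1 / (4 * c^2) * sob_weight (2 * \<gamma>) m * cmod z ^ 2"
proof -
  have "\<forall>p::int. \<bar>kdot (0, e) m - of_int p\<bar> > c * sqn (snd m) powr (- \<gamma>)"
    using dio_eta assms by blast
  from norm_div_exp_minus_1_sq_le[OF c_pos \<gamma>_nonneg sqn_pos[OF assms] sqn_snd_le_sob_base this]
  show "mult_eta m \<noteq> 0"
    and "cmod (z / mult_eta m)^2 \<le> 1 / (4 * c^2) * sob_weight (2 * \<gamma>) m * cmod z ^ 2"
    unfolding multiplier_def sob_weight_def by auto
qed

text \<open>The term \<open>a * f m\<close> does not affect the estimates, since \<open>\<phi>\<^sub>m\<close> is a multiple of \<open>f\<^sub>m\<close>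
there; it is only used to make \<open>P\<close> nonconstant by choosing \<open>a \<in> {0, 1}\<close>.\<close>

definition solution :: "'n coeffs \<Rightarrow> 'n coeffs \<Rightarrow> complex \<Rightarrow> 'n coeffs" where
  "solution f g a m =
     (if fst m \<noteq> 0 then f m / mult_tau m
      else if snd m \<noteq> 0 then g m / mult_eta m + a * f m
      else 0)"

definition estimate_const :: real where
  "estimate_const = 2 * (1 / (4 * c^2) + 1)"

lemma weight_ge_1: "1 \<le> sob_weight (2 * \<gamma>) m"
  using \<gamma>_nonneg by (intro sob_weight_ge_1) simp

lemma le_estimate_const_weight:
  assumes "0 \<le> y"
  shows "1 / (4 * c^2) * sob_weight (2 * \<gamma>) m * y \<le> estimate_const * sob_weight (2 * \<gamma>) m * y"
    and "y \<le> estimate_const * sob_weight (2 * \<gamma>) m * y"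
    and "0 \<le> estimate_const * sob_weight (2 * \<gamma>) m * y"
proof -
  note w = weight_ge_1[of m]
  have K: "1 / (4 * c^2) \<le> estimate_const" "1 \<le> estimate_const"
    using c_pos by (simp_all add: estimate_const_def field_simps)
  show "1 / (4 * c^2) * sob_weight (2 * \<gamma>) m * y \<le> estimate_const * sob_weight (2 * \<gamma>) m * y"
    using w K assms by (intro mult_right_mono) auto
  have "1 * 1 * y \<le> estimate_const * sob_weight (2 * \<gamma>) m * y"
    using w K assms by (intro mult_right_mono mult_mono) auto
  then show "y \<le> estimate_const * sob_weight (2 * \<gamma>) m * y"
    by simp
  with assms show "0 \<le> estimate_const * sob_weight (2 * \<gamma>) m * y"
    by linarith
qed

lemma solution_pointwise_fst_ne_0:
  assumes "fst m \<noteq> 0" and eq: "\<phi> m = mult_eta m * f m - mult_tau m * g m"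
  shows "cmod ((g - Lop (0, e) (solution f g a)) m)^2 \<le> estimate_const * sob_weight (2 * \<gamma>) m * cmod (\<phi> m)^2"
    and "cmod ((f - Lop (t, 0) (solution f g a)) m)^2 \<le> estimate_const * sob_weight (2 * \<gamma>) m * cmod (\<phi> m)^2"
    and "cmod (solution f g a m)^2 \<le> estimate_const * sob_weight (2 * \<gamma>) m * (cmod (f m)^2 + cmod (g m)^2)"
proof -
  note D = mult_tau_bounds[OF \<open>fst m \<noteq> 0\<close>]
  have P: "solution f g a m = f m / mult_tau m"
    using assms(1) by (simp add: solution_def)
  have "(g - Lop (0, e) (solution f g a)) m = - (\<phi> m / mult_tau m)"
    using D(1) by (simp add: Lop_apply P eq field_simps)
  then show "cmod ((g - Lop (0, e) (solution f g a)) m)^2 \<le> estimate_const * sob_weight (2 * \<gamma>) m * cmod (\<phi> m)^2"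
    using D(2)[of "\<phi> m"] le_estimate_const_weight(1)[of "cmod (\<phi> m)^2" m] by simp
  have "(f - Lop (t, 0) (solution f g a)) m = 0"
    using D(1) by (simp add: Lop_apply P)
  then show "cmod ((f - Lop (t, 0) (solution f g a)) m)^2 \<le> estimate_const * sob_weight (2 * \<gamma>) m * cmod (\<phi> m)^2"
    using le_estimate_const_weight(3)[of "cmod (\<phi> m)^2" m] by simp
  have "cmod (solution f g a m)^2 \<le> estimate_const * sob_weight (2 * \<gamma>) m * cmod (f m)^2"
    using D(2)[of "f m"] le_estimate_const_weight(1)[of "cmod (f m)^2" m] P by simp
  also have "\<dots> \<le> estimate_const * sob_weight (2 * \<gamma>) m * (cmod (f m)^2 + cmod (g m)^2)"
    using le_estimate_const_weight(2)[of 1 m] by (intro mult_left_mono) auto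
  finally show "cmod (solution f g a m)^2 \<le> estimate_const * sob_weight (2 * \<gamma>) m * (cmod (f m)^2 + cmod (g m)^2)" .
qed

lemma solution_pointwise_snd_ne_0:
  assumes "fst m = 0" "snd m \<noteq> 0" and a: "cmod a \<le> 1"
    and eq: "\<phi> m = mult_eta m * f m - mult_tau m * g m"
  shows "cmod ((g - Lop (0, e) (solution f g a)) m)^2 \<le> estimate_const * sob_weight (2 * \<gamma>) m * cmod (\<phi> m)^2"
    and "cmod ((f - Lop (t, 0) (solution f g a)) m)^2 \<le> estimate_const * sob_weight (2 * \<gamma>) m * cmod (\<phi> m)^2"
    and "cmod (solution f g a m)^2 \<le> estimate_const * sob_weight (2 * \<gamma>) m * (cmod (f m)^2 + cmod (g m)^2)"
proof -
  note D = mult_eta_bounds[OF \<open>snd m \<noteq> 0\<close>]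
  have \<phi>: "\<phi> m = mult_eta m * f m"
    using eq multiplier_fst_eq_0[OF \<open>fst m = 0\<close>] by simp
  have P: "solution f g a m = g m / mult_eta m + a * f m"
    using assms(1,2) by (simp add: solution_def)
  have small: "cmod (a * z)^2 \<le> cmod z ^ 2" for z
    using a by (simp add: norm_mult power_mult_distrib mult_left_le_one_le power_le_one)
  have "(g - Lop (0, e) (solution f g a)) m = - (a * \<phi> m)"
    using D(1) by (simp add: Lop_apply P \<phi> field_simps)
  then show "cmod ((g - Lop (0, e) (solution f g a)) m)^2 \<le> estimate_const * sob_weight (2 * \<gamma>) m * cmod (\<phi> m)^2"
    using order_trans[OF small le_estimate_const_weight(2), of "\<phi> m" m] by simp
  have "(f - Lop (t, 0) (solution f g a)) m = \<phi> m / mult_eta m"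
    using D(1) by (simp add: Lop_apply \<phi> multiplier_fst_eq_0[OF \<open>fst m = 0\<close>])
  then show "cmod ((f - Lop (t, 0) (solution f g a)) m)^2 \<le> estimate_const * sob_weight (2 * \<gamma>) m * cmod (\<phi> m)^2"
    using D(2)[of "\<phi> m"] le_estimate_const_weight(1)[of "cmod (\<phi> m)^2" m] by simp
  have "cmod (solution f g a m)^2 \<le> (cmod (g m / mult_eta m) + cmod (a * f m))^2"
    unfolding P by (intro power_mono norm_triangle_ineq) auto
  also have "\<dots> \<le> 2 * cmod (g m / mult_eta m)^2 + 2 * cmod (a * f m)^2"
    using zero_le_power2[of "cmod (g m / mult_eta m) - cmod (a * f m)"]
    by (simp add: power2_eq_square algebra_simps)
  also have "\<dots> \<le> 2 * (1 / (4 * c^2) * sob_weight (2 * \<gamma>) m * cmod (g m)^2) + 2 * cmod (f m)^2"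
    using D(2)[of "g m"] small[of "f m"] by linarith
  also have "\<dots> \<le> estimate_const * sob_weight (2 * \<gamma>) m * (cmod (f m)^2 + cmod (g m)^2)"
  proof -
    have "2 * (B * w * G) + 2 * F \<le> 2 * (B + 1) * w * (F + G)"
      if "0 \<le> B" "1 \<le> w" "0 \<le> F" "0 \<le> G" for B w F G :: real
    proof -
      have "F \<le> w * F" "0 \<le> B * w * F" "0 \<le> w * G"
        using that mult_right_mono[of 1 w F] by simp_all
      then show ?thesis
        by (simp add: algebra_simps)
    qed
    from this[of "1 / (4 * c^2)" "sob_weight (2 * \<gamma>) m" "cmod (f m)^2" "cmod (g m)^2"]
    show ?thesis
      unfolding estimate_const_def using weight_ge_1[of m] by simp
  qed
  finally show "cmod (solution f g a m)^2 \<le> estimate_const * sob_weight (2 * \<gamma>) m * (cmod (f m)^2 + cmod (g m)^2)" .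
qed

lemma solution_pointwise:
  assumes "f 0 = 0" "g 0 = 0" "cmod a \<le> 1"
    and "\<phi> m = mult_eta m * f m - mult_tau m * g m"
  shows "cmod ((g - Lop (0, e) (solution f g a)) m)^2 \<le> estimate_const * sob_weight (2 * \<gamma>) m * cmod (\<phi> m)^2" (is ?g_err)
    and "cmod ((f - Lop (t, 0) (solution f g a)) m)^2 \<le> estimate_const * sob_weight (2 * \<gamma>) m * cmod (\<phi> m)^2" (is ?f_err)
    and "cmod (solution f g a m)^2 \<le> estimate_const * sob_weight (2 * \<gamma>) m * (cmod (f m)^2 + cmod (g m)^2)" (is ?P_bound)
proof -
  consider "fst m \<noteq> 0" | "fst m = 0" "snd m \<noteq> 0" | "m = 0"
    by (metis prod.collapse zero_prod_def)
  then have "?g_err \<and> ?f_err \<and> ?P_bound"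
  proof cases
    case 1
    then show ?thesis
      using solution_pointwise_fst_ne_0 assms(4) by blast
  next
    case 2
    then show ?thesis
      using solution_pointwise_snd_ne_0 assms(3,4) by blast
  next
    case 3
    then show ?thesis
      using assms(1,2) le_estimate_const_weight(3)[of "cmod (\<phi> 0)^2" 0]
      by (simp add: Lop_apply solution_def)
  qed
  then show ?g_err ?f_err ?P_bound
    by auto
qed

lemma estimate_const_pos: "0 < estimate_const"
  unfolding estimate_const_def by (simp add: add_nonneg_pos)

lemma solution_sobolev_bounds:
  assumes "W_inf \<phi>" "W0_inf f" "W0_inf g" "cmod a \<le> 1"
    and eq: "Lop (0, e) f - Lop (t, 0) g = \<phi>"
  shows "W_inf (solution f g a)"
    and "sob_norm s (g - Lop (0, e) (solution f g a)) \<le> sqrt estimate_const * sob_norm (s + 2 * \<gamma>) \<phi>"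
    and "sob_norm s (f - Lop (t, 0) (solution f g a)) \<le> sqrt estimate_const * sob_norm (s + 2 * \<gamma>) \<phi>"
    and "sob_norm s (solution f g a) \<le> sqrt estimate_const * (sob_norm (s + 2 * \<gamma>) f + sob_norm (s + 2 * \<gamma>) g)"
proof -
  have W: "in_W r \<phi>" "in_W r f" "in_W r g" for r
    using assms(1-3) unfolding W0_inf_def W_inf_def by auto
  have zero_avg: "f 0 = 0" "g 0 = 0"
    using assms(2,3) unfolding W0_inf_def by auto
  have "\<phi> m = mult_eta m * f m - mult_tau m * g m" for m
    using fun_cong[OF eq, of m] by (simp add: Lop_apply)
  note pointwise = solution_pointwise[where f = f and g = g and \<phi> = \<phi>, OF zero_avg \<open>cmod a \<le> 1\<close> this]
  note K = less_imp_le[OF estimate_const_pos]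
  show "W_inf (solution f g a)"
    unfolding W_inf_def
  proof
    fix r
    show "in_W r (solution f g a)"
      using sob_norm_le_pointwise(1)[OF W(2,3)[of "r + 2 * \<gamma>"] K pointwise(3)] W by simp
  qed
  show "sob_norm s (g - Lop (0, e) (solution f g a)) \<le> sqrt estimate_const * sob_norm (s + 2 * \<gamma>) \<phi>"
    using sob_norm_le_pointwise_single[OF W(1) K pointwise(1)] by (simp add: fun_diff_def)
  show "sob_norm s (f - Lop (t, 0) (solution f g a)) \<le> sqrt estimate_const * sob_norm (s + 2 * \<gamma>) \<phi>"
    using sob_norm_le_pointwise_single[OF W(1) K pointwise(2)] by (simp add: fun_diff_def)
  show "sob_norm s (solution f g a) \<le> sqrt estimate_const * (sob_norm (s + 2 * \<gamma>) f + sob_norm (s + 2 * \<gamma>) g)"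
    using sob_norm_le_pointwise(2)[OF W(2,3) K pointwise(3)] W by simp
qed

lemma solution_nonconst:
  assumes "nonconst f"
  shows "nonconst (solution f g 0) \<or> nonconst (solution f g 1)"
proof (rule ccontr)
  assume "\<not> ?thesis"
  then have vanish: "solution f g 0 m = 0" "solution f g 1 m = 0" if "m \<noteq> 0" for m
    using that unfolding nonconst_def by blast+
  obtain m where m: "m \<noteq> 0" "f m \<noteq> 0"
    using assms unfolding nonconst_def by blast
  show False
  proof (cases "fst m = 0")
    case True
    then have "snd m \<noteq> 0"
      using m(1) by (simp add: prod_eq_iff)
    with True have "solution f g 1 m - solution f g 0 m = f m"
      by (simp add: solution_def)
    then show False
      using vanish[OF m(1)] m(2) by simp
  next
    case False
    then have "solution f g 0 m = f m / mult_tau m" "mult_tau m \<noteq> 0"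
      using mult_tau_bounds(1) by (simp_all add: solution_def)
    then show False
      using vanish[OF m(1)] m(2) by simp
  qed
qed

end

theorem proposition2p2:
  fixes t e :: "real^'n::finite" and c \<gamma> :: real
  assumes n2: "CARD('n) \<ge> 2"
    and orth: "(\<Sum>j\<in>UNIV. t $ j * e $ j) = 0"
    and cpos: "c > 0" and gpos: "\<gamma> > 0"
    and dio_tau: "\<forall>(m::'n freq) (p::int). fst m \<noteq> 0 \<longrightarrow>
        \<bar>kdot (t, 0) m - real_of_int p\<bar> > c * (sqn (fst m)) powr (- \<gamma>)"
    and dio_eta: "\<forall>(m::'n freq) (p::int). snd m \<noteq> 0 \<longrightarrow>
        \<bar>kdot (0, e) m - real_of_int p\<bar> > c * (sqn (snd m)) powr (- \<gamma>)"
  shows "\<exists>C>0. \<forall>(\<phi>::'n coeffs) f g.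
     W_inf \<phi> \<and> W0_inf f \<and> W0_inf g \<and> nonconst f \<and> nonconst g \<and>
     Lop (0, e) f - Lop (t, 0) g = \<phi> \<longrightarrow>
     (\<exists>P. W_inf P \<and> nonconst P \<and>
        (\<forall>s\<ge>0. sob_norm s (g - Lop (0, e) P) \<le> C * sob_norm (s + 2 * \<gamma>) \<phi> \<and>
                sob_norm s (f - Lop (t, 0) P) \<le> C * sob_norm (s + 2 * \<gamma>) \<phi> \<and>
                sob_norm s P \<le> C * (sob_norm (s + 2 * \<gamma>) f + sob_norm (s + 2 * \<gamma>) g)))"
proof -
  interpret diophantine_pair t e c \<gamma>
    using cpos gpos dio_tau dio_eta by unfold_locales auto
  show ?thesis
  proof (intro exI[of _ "sqrt estimate_const"] conjI allI impI)
    show "0 < sqrt estimate_const"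
      using estimate_const_pos by simp
    fix \<phi> f g :: "'n coeffs"
    assume "W_inf \<phi> \<and> W0_inf f \<and> W0_inf g \<and> nonconst f \<and> nonconst g \<and>
      Lop (0, e) f - Lop (t, 0) g = \<phi>"
    then have hyps: "W_inf \<phi>" "W0_inf f" "W0_inf g" "Lop (0, e) f - Lop (t, 0) g = \<phi>"
      and "nonconst f"
      by auto
    obtain a :: complex where "cmod a \<le> 1" "nonconst (solution f g a)"
      using solution_nonconst[OF \<open>nonconst f\<close>, of g] norm_zero norm_one by force
    with solution_sobolev_bounds[OF hyps(1-3) _ hyps(4)]
    show "\<exists>P. W_inf P \<and> nonconst P \<and>
        (\<forall>s\<ge>0. sob_norm s (g - Lop (0, e) P) \<le> sqrt estimate_const * sob_norm (s + 2 * \<gamma>) \<phi> \<and>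
                sob_norm s (f - Lop (t, 0) P) \<le> sqrt estimate_const * sob_norm (s + 2 * \<gamma>) \<phi> \<and>
                sob_norm s P \<le> sqrt estimate_const * (sob_norm (s + 2 * \<gamma>) f + sob_norm (s + 2 * \<gamma>) g))"
      by blast
  qed
qed

end
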